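(* Let $\mathcal{B}\subseteq\mathcal{C}^n$. Let $\mathcal{L}$ be a family of polyhedra belonging to $\mathcal{C}^n$, and suppose there is $m\in\mathbb{N}$ such that every $L\in\mathcal{L}$ has at most $m$ facets. Then: (a) If $\mathcal{B}$ is $f$-closed for a fixed $f\in\mathbb{R}^n\setminus\mathbb{Z}^n$, then $\rho_f(\mathcal{B},\mathcal{L})<\infty$ if and only if there exists $\mu\in(0,1)$ such that for every $L\in\mathcal{L}_f$ some $B\in\mathcal{B}$ satisfies $B\supseteq\mu L+(1-\mu)f$. (b) If $\mathcal{B}$ is $f$-closed for all $f\in\mathbb{R}^n\setminus\mathbb{Z}^n$, then $\rho(\mathcal{B},\mathcal{L})<\infty$ if and only if there exists $\mu\in(0,1)$ such that for every $f\in\mathbb{R}^n\setminus\mathbb{Z}^n$ and every $L\in\mathcal{L}_f$ some $B\in\mathcal{B}$ satisfies $B\supseteq\mu L+(1-\mu)f$.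
   Context: $\mathcal{C}^n$ is the family of all $n$-dimensional closed convex subsets of $\mathbb{R}^n$. For $B\in\mathcal{C}^n$ with $0\in\operatorname{int}(B)$, $\psi_B(r)=\inf\{\lambda>0:r\in\lambda B\}$. For $k\in\mathbb{N}$, $R=(r_1,\dots,r_k)\in\mathbb{R}^{n\times k}$, $f\in\mathbb{R}^n\setminus\mathbb{Z}^n$, $B\in\mathcal{C}^n$: if $f\in\operatorname{int}(B)$, $C_B(R,f)=\{s\in\mathbb{R}^k_{\ge0}:\sum_j s_j\psi_{B-f}(r_j)\ge1\}$, otherwise $C_B(R,f)=\mathbb{R}^k_{\ge0}$; for $\mathcal{B}\subseteq\mathcal{C}^n$, $C_{\mathcal{B}}(R,f)=\bigcap_{B\in\mathcal{B}}C_B(R,f)$ ($=\mathbb{R}^k_{\ge0}$ if $\mathcal{B}=\emptyset$). For $\mathcal{B},\mathcal{L}\subseteq\mathcal{C}^n$, $\rho_f(\mathcal{B},\mathcal{L})=\inf\{\alpha>0:C_{\mathcal{B}}(R,f)\subseteq\frac1\alpha C_{\mathcal{L}}(R,f)$ for all $k$ and all $R\in\mathbb{R}^{n\times k}\}$ and $\rho(\mathcal{B},\mathcal{L})=\sup_{f\in\mathbb{R}^n\setminus\mathbb{Z}^n}\rho_f(\mathcal{B},\mathcal{L})$. For a family $\mathcal{B}\subseteq\mathcal{C}^n$, $\mathcal{B}_f$ is the subfamily of sets in $\mathcal{B}$ containing $f$ in the interior, and $\mathcal{C}^n_f$ is the family of sets in $\mathcal{C}^n$ containing $f$ in the interior.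 $\mathcal{B}$ is $f$-closed if the family $\{\psi_{B-f}:B\in\mathcal{B}_f\}$ is closed under pointwise convergence within the family $\{\psi_{C-f}:C\in\mathcal{C}^n_f\}$, i.e. whenever $B_t\in\mathcal{B}_f$, $C\in\mathcal{C}^n_f$ and $\psi_{B_t-f}\to\psi_{C-f}$ pointwise, then $C\in\mathcal{B}_f$. *)

theory Defs
  imports "HOL-Analysis.Analysis"
begin

definition Cn :: "(real^'n) set set" where
  "Cn = {B. closed B \<and> convex B \<and> aff_dim B = int CARD('n)}"

definition Zn :: "(real^'n) set" where
  "Zn = {x. \<forall>i. x $ i \<in> \<int>}"

definition psi :: "(real^'n) set \<Rightarrow> real^'n \<Rightarrow> real" where
  "psi B r = Inf {l. l > 0 \<and> r \<in> (\<lambda>x. l *\<^sub>R x) ` B}"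

definition transl :: "(real^'n) set \<Rightarrow> real^'n \<Rightarrow> (real^'n) set" where
  "transl B f = (\<lambda>x. x - f) ` B"

text \<open>The nonnegative orthant R^k_{>=0}; vectors s in R^k are represented as
  functions nat => real vanishing outside {0..<k}.\<close>
definition orth :: "nat \<Rightarrow> (nat \<Rightarrow> real) set" where
  "orth k = {s. (\<forall>j<k. 0 \<le> s j) \<and> (\<forall>j\<ge>k. s j = 0)}"

text \<open>C_B(R,f), with R = (r_0,...,r_{k-1}) given by r :: nat => real^n.\<close>
definition CB :: "(real^'n) set \<Rightarrow> nat \<Rightarrow> (nat \<Rightarrow> real^'n) \<Rightarrow> real^'n \<Rightarrow> (nat \<Rightarrow> real) set" where
  "CB B k r f = (if f \<in> interior B
      then {s \<in> orth k. (\<Sum>j<k. s j * psi (transl B f) (r j)) \<ge> 1}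
      else orth k)"

text \<open>C_{family}(R,f) (equal to the orthant for the empty family).\<close>
definition CFam :: "(real^'n) set set \<Rightarrow> nat \<Rightarrow> (nat \<Rightarrow> real^'n) \<Rightarrow> real^'n \<Rightarrow> (nat \<Rightarrow> real) set" where
  "CFam \<B> k r f = orth k \<inter> (\<Inter>B\<in>\<B>. CB B k r f)"

definition sscale :: "real \<Rightarrow> (nat \<Rightarrow> real) set \<Rightarrow> (nat \<Rightarrow> real) set" where
  "sscale c C = (\<lambda>s j. c * s j) ` C"

text \<open>rho_f(B,L) as an extended real (infimum of the empty set is +infinity).\<close>
definition rho_f :: "real^'n \<Rightarrow> (real^'n) set set \<Rightarrow> (real^'n) set set \<Rightarrow> ereal" where
  "rho_f f \<B> \<L> = Inf (ereal ` {a. a > 0 \<and>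
      (\<forall>k::nat. k \<ge> 1 \<longrightarrow> (\<forall>r::nat \<Rightarrow> real^'n.
          CFam \<B> k r f \<subseteq> sscale (1 / a) (CFam \<L> k r f)))})"

definition rho :: "(real^'n) set set \<Rightarrow> (real^'n) set set \<Rightarrow> ereal" where
  "rho \<B> \<L> = (SUP f\<in>(UNIV - Zn). rho_f f \<B> \<L>)"

definition fam_at :: "(real^'n) set set \<Rightarrow> real^'n \<Rightarrow> (real^'n) set set" where
  "fam_at \<B> f = {B \<in> \<B>. f \<in> interior B}"

definition f_closed :: "real^'n \<Rightarrow> (real^'n) set set \<Rightarrow> bool" where
  "f_closed f \<B> \<longleftrightarrow>
     (\<forall>(Bs :: nat \<Rightarrow> (real^'n) set) C.
        (\<forall>t. Bs t \<in> fam_at \<B> f) \<and> C \<in> fam_at Cn f \<and>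
        (\<forall>x. (\<lambda>t. psi (transl (Bs t) f) x) \<longlonglongrightarrow> psi (transl C f) x)
        \<longrightarrow> C \<in> fam_at \<B> f)"

definition shrink :: "real \<Rightarrow> (real^'n) set \<Rightarrow> real^'n \<Rightarrow> (real^'n) set" where
  "shrink \<mu> L f = (\<lambda>x. \<mu> *\<^sub>R x + (1 - \<mu>) *\<^sub>R f) ` L"

end

theory Submission
  imports Defs "HOL-Complex_Analysis.Great_Picard"
begin

text \<open>If \<open>\<mu>L + (1 - \<mu>)f \<subseteq> B\<close>, then \<open>\<mu> \<psi>(B - f) \<le> \<psi>(L - f)\<close> for the gauges, which gives
  \<open>\<rho>\<^sub>f \<le> 1/\<mu>\<close>. Conversely, let \<open>\<alpha>\<close> be admissible in the definition of \<open>\<rho>\<^sub>f\<close>. Testing the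
  inclusion \<open>\<alpha> C\<^sub>\<B>(R, f) \<subseteq> C\<^sub>\<L>(R, f)\<close> on the rays from \<open>f\<close> to the \<open>N\<close> vertices of a polytope
  \<open>P \<subseteq> L\<close>, with equal weights, yields one \<open>B \<in> \<B>\<close> containing these vertices shrunk towards \<open>f\<close>
  by the factor \<open>1 / (2\<alpha>N + 1)\<close>, hence the whole shrunk \<open>P\<close>. Cutting \<open>L\<close> with larger and larger
  cubes around \<open>f\<close> gives such polytopes with \<open>N \<le> 2^(m + 2n)\<close>, because a vertex is determined by
  its set of active inequalities. The sets \<open>B\<close> obtained in this way all contain a fixed ball
  around \<open>f\<close>, so their gauges are equi-Lipschitz; a pointwise convergent subsequence converges to
  the gauge of a closed convex set, which lies in \<open>\<B>\<close> by \<open>f\<close>-closedness and contains the shrunk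
  \<open>L\<close>. The factor depends only on \<open>\<alpha>\<close>, \<open>m\<close> and \<open>n\<close>, which gives the uniform version (b).\<close>

section \<open>Gauge functions\<close>

lemma mem_scaleR_image_iff:
  fixes D :: "'a::real_vector set"
  assumes "l \<noteq> 0"
  shows "x \<in> (\<lambda>z. l *\<^sub>R z) ` D \<longleftrightarrow> (1/l) *\<^sub>R x \<in> D"
  using assms by (auto simp: image_iff intro!: bexI[where x = "(1/l) *\<^sub>R x"])

definition gauge_levels :: "(real^'n) set \<Rightarrow> real^'n \<Rightarrow> real set" where
  "gauge_levels D x = {l. 0 < l \<and> (1/l) *\<^sub>R x \<in> D}"

lemma psi_eq_Inf_gauge_levels: "psi D x = Inf (gauge_levels D x)"
  unfolding psi_def gauge_levels_def
  by (rule arg_cong[where f = Inf]) (auto simp: mem_scaleR_image_iff)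

lemma psi_le: "l \<in> gauge_levels D x \<Longrightarrow> psi D x \<le> l"
  unfolding psi_eq_Inf_gauge_levels
  by (rule cInf_lower) (auto simp: gauge_levels_def intro!: bdd_belowI[of _ 0])

lemma psi_le_one: "x \<in> D \<Longrightarrow> psi D x \<le> 1"
  by (rule psi_le) (simp add: gauge_levels_def)

lemma psi_ge:
  assumes "gauge_levels D x \<noteq> {}" "\<And>l. l \<in> gauge_levels D x \<Longrightarrow> c \<le> l"
  shows "c \<le> psi D x"
  unfolding psi_eq_Inf_gauge_levels using assms by (rule cInf_greatest)

lemma gauge_levels_if_norm_less:
  fixes D :: "(real^'n) set"
  assumes "ball 0 d \<subseteq> D" "0 < l" "norm x < d * l"
  shows "l \<in> gauge_levels D x"
proof -
  have "norm ((1/l) *\<^sub>R x) < d"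
    using assms(2,3) by (simp add: field_simps)
  then show ?thesis
    using assms(1,2) by (auto simp: gauge_levels_def)
qed

lemma gauge_levels_nonempty:
  fixes D :: "(real^'n) set"
  assumes "ball 0 d \<subseteq> D" "0 < d"
  shows "gauge_levels D x \<noteq> {}"
proof -
  have "norm x / d + 1 \<in> gauge_levels D x"
    using assms by (intro gauge_levels_if_norm_less) (auto simp: field_simps add_pos_nonneg)
  then show ?thesis by blast
qed

lemma gauge_levels_mono:
  fixes D :: "(real^'n) set"
  assumes "convex D" "0 \<in> D" "l \<in> gauge_levels D x" "l \<le> l'"
  shows "l' \<in> gauge_levels D x"
proof -
  have l: "0 < l" "(1/l) *\<^sub>R x \<in> D"
    using assms(3) by (auto simp: gauge_levels_def)
  then have "(l/l') *\<^sub>R ((1/l) *\<^sub>R x) + (1 - l/l') *\<^sub>R 0 \<in> D"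
    using assms(4) by (intro convexD[OF assms(1) _ assms(2)]) auto
  then show ?thesis
    using l assms(4) by (simp add: gauge_levels_def)
qed

lemma scaleR_mem_if_psi_less:
  fixes D :: "(real^'n) set"
  assumes "convex D" "ball 0 d \<subseteq> D" "0 < d" "psi D x < c"
  shows "(1/c) *\<^sub>R x \<in> D"
proof -
  obtain l where "l \<in> gauge_levels D x" "l < c"
    using assms(4) gauge_levels_nonempty[OF assms(2,3)]
    unfolding psi_eq_Inf_gauge_levels by (meson cInf_lessD)
  moreover have "0 \<in> D"
    using assms(2,3) by auto
  ultimately have "c \<in> gauge_levels D x"
    using gauge_levels_mono[OF assms(1)] by fastforce
  then show ?thesis by (simp add: gauge_levels_def)
qed

lemma psi_nonneg:
  fixes D :: "(real^'n) set"
  assumes "ball 0 d \<subseteq> D" "0 < d"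
  shows "0 \<le> psi D x"
  using gauge_levels_nonempty[OF assms] by (rule psi_ge) (simp add: gauge_levels_def)

lemma psi_le_norm_divide:
  fixes D :: "(real^'n) set"
  assumes "ball 0 d \<subseteq> D" "0 < d"
  shows "psi D x \<le> norm x / d"
proof (rule field_le_epsilon)
  fix e :: real
  assume "0 < e"
  then have "norm x / d + e \<in> gauge_levels D x"
    using assms by (intro gauge_levels_if_norm_less) (auto simp: field_simps add_nonneg_pos)
  then show "psi D x \<le> norm x / d + e"
    by (rule psi_le)
qed

lemma psi_zero:
  fixes D :: "(real^'n) set"
  assumes "ball 0 d \<subseteq> D" "0 < d"
  shows "psi D 0 = 0"
  using psi_nonneg[OF assms, of 0] psi_le_norm_divide[OF assms, of 0] by simp

lemma psi_scaleR:
  fixes D :: "(real^'n) set"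
  assumes "ball 0 d \<subseteq> D" "0 < d" "0 \<le> c"
  shows "psi D (c *\<^sub>R x) = c * psi D x"
proof (cases "c = 0")
  case True
  then show ?thesis using psi_zero[OF assms(1,2)] by simp
next
  case False
  then have c: "0 < c" using assms(3) by simp
  have levels: "l \<in> gauge_levels D (c *\<^sub>R x) \<longleftrightarrow> l / c \<in> gauge_levels D x" for l
    using c by (simp add: gauge_levels_def zero_less_divide_iff)
  have "psi D (c *\<^sub>R x) / c \<le> l" if "l \<in> gauge_levels D x" for l
    using that c levels[of "c * l"] psi_le[of "c * l"] by (simp add: field_simps)
  then have "psi D (c *\<^sub>R x) / c \<le> psi D x"
    by (intro psi_ge gauge_levels_nonempty[OF assms(1,2)])
  moreover have "c * psi D x \<le> l" if "l \<in> gauge_levels D (c *\<^sub>R x)" for l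
    using that c levels psi_le[of "l / c"] by (simp add: field_simps)
  then have "c * psi D x \<le> psi D (c *\<^sub>R x)"
    by (intro psi_ge gauge_levels_nonempty[OF assms(1,2)])
  ultimately show ?thesis using c by (simp add: field_simps)
qed

lemma psi_add_le:
  fixes D :: "(real^'n) set"
  assumes "ball 0 d \<subseteq> D" "0 < d" "convex D"
  shows "psi D (x + y) \<le> psi D x + psi D y"
proof -
  have sum: "l1 + l2 \<in> gauge_levels D (x + y)"
    if "l1 \<in> gauge_levels D x" "l2 \<in> gauge_levels D y" for l1 l2
  proof -
    have l: "0 < l1" "(1/l1) *\<^sub>R x \<in> D" "0 < l2" "(1/l2) *\<^sub>R y \<in> D"
      using that by (auto simp: gauge_levels_def)
    then have "(l1 / (l1 + l2)) *\<^sub>R ((1/l1) *\<^sub>R x) + (l2 / (l1 + l2)) *\<^sub>R ((1/l2) *\<^sub>R y) \<in> D"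
      by (intro convexD[OF assms(3)]) (auto simp: add_divide_distrib[symmetric])
    then show ?thesis
      using l by (simp add: gauge_levels_def scaleR_add_right)
  qed
  have "psi D (x + y) - l2 \<le> psi D x" if "l2 \<in> gauge_levels D y" for l2
    using sum[OF _ that] psi_le
    by (intro psi_ge gauge_levels_nonempty[OF assms(1,2)]) fastforce
  then have "psi D (x + y) - psi D x \<le> psi D y"
    by (intro psi_ge gauge_levels_nonempty[OF assms(1,2)]) fastforce
  then show ?thesis by simp
qed

lemma psi_lipschitz:
  fixes D :: "(real^'n) set"
  assumes "ball 0 d \<subseteq> D" "0 < d" "convex D"
  shows "\<bar>psi D x - psi D y\<bar> \<le> norm (x - y) / d"
proof -
  have "psi D x \<le> psi D y + norm (x - y) / d" for x y
    using psi_add_le[OF assms, of y "x - y"] psi_le_norm_divide[OF assms(1,2), of "x - y"] by simp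
  from this[of x y] this[of y x] show ?thesis
    by (simp add: norm_minus_commute abs_le_iff)
qed

lemma psi_sublevel:
  fixes g :: "real^'n \<Rightarrow> real"
  assumes nonneg: "\<And>x. 0 \<le> g x" and homogeneous: "\<And>c x. 0 < c \<Longrightarrow> g (c *\<^sub>R x) = c * g x"
  shows "psi {x. g x \<le> 1} x = g x"
proof -
  have "gauge_levels {x. g x \<le> 1} x = {l. 0 < l \<and> g x \<le> l}"
    using homogeneous[of "1/_" x] by (auto simp: gauge_levels_def divide_le_eq)
  also have "\<dots> = (if g x = 0 then {0<..} else {g x..})"
    using nonneg[of x] by auto
  finally show ?thesis
    by (simp add: psi_eq_Inf_gauge_levels)
qed

lemma mem_if_psi_le_one:
  fixes S :: "(real^'n) set"
  assumes "closed S" "convex S" "ball 0 r \<subseteq> S" "0 < r" "psi S x \<le> 1"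
  shows "x \<in> S"
proof -
  define c where "c n = 1 + inverse (real (Suc n))" for n
  have "psi S x < c n" for n
  proof -
    have "0 < inverse (real (Suc n))"
      by simp
    then show ?thesis
      using assms(5) unfolding c_def by linarith
  qed
  then have in_S: "(1 / c n) *\<^sub>R x \<in> S" for n
    by (rule scaleR_mem_if_psi_less[OF assms(2-4)])
  have "c \<longlonglongrightarrow> 1"
    using tendsto_add[OF tendsto_const LIMSEQ_inverse_real_of_nat, of 1] by (simp add: c_def[abs_def])
  then have "(\<lambda>n. (1 / c n) *\<^sub>R x) \<longlonglongrightarrow> (1 / 1) *\<^sub>R x"
    by (intro tendsto_intros) simp_all
  then show ?thesis
    using closed_sequentially[OF assms(1) in_S] by simp
qed

section \<open>Translation and shrinking\<close>

lemma mem_transl_iff: "z \<in> transl B f \<longleftrightarrow> z + f \<in> B"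
  by (force simp: transl_def)

lemma convex_transl: "convex B \<Longrightarrow> convex (transl B f)"
  unfolding transl_def by (rule convex_translation_subtract)

lemma ball_subset_transl_iff:
  fixes B :: "(real^'n) set"
  shows "ball 0 r \<subseteq> transl B f \<longleftrightarrow> ball f r \<subseteq> B"
proof -
  have "ball 0 r = transl (ball f r) f"
    unfolding transl_def ball_translation_subtract[symmetric] by simp
  moreover have "inj (\<lambda>x::real^'n. x - f)"
    by (simp add: inj_def)
  ultimately show ?thesis
    by (simp add: transl_def inj_image_subset_iff)
qed

lemma transl_translation: "transl ((+) f ` S) f = S"
  by (simp add: transl_def image_image)

lemma shrink_eq_affinity: "shrink \<mu> S f = (\<lambda>x. (1 - \<mu>) *\<^sub>R f + \<mu> *\<^sub>R x) ` S"
  by (simp add: shrink_def add.commute)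

lemma shrink_convex_hull: "shrink \<mu> (convex hull S) f = convex hull (shrink \<mu> S f)"
  by (simp add: shrink_eq_affinity convex_hull_affinity)

lemma shrink_ball:
  assumes "0 < \<mu>"
  shows "shrink \<mu> (ball f r) f = ball f (\<mu> * r)"
proof -
  have "shrink \<mu> (ball f r) f = (+) ((1 - \<mu>) *\<^sub>R f) ` ((*\<^sub>R) \<mu> ` ball f r)"
    by (simp add: shrink_eq_affinity image_image)
  also have "\<dots> = (+) ((1 - \<mu>) *\<^sub>R f) ` ball (\<mu> *\<^sub>R f) (\<mu> * r)"
    using assms by (simp add: ball_scale)
  also have "\<dots> = ball (\<mu> *\<^sub>R f + (1 - \<mu>) *\<^sub>R f) (\<mu> * r)"
    by (rule image_add_ball)
  finally show ?thesis
    by (simp add: algebra_simps)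
qed

lemma interior_if_shrink_subset:
  assumes "shrink \<mu> L f \<subseteq> B" "f \<in> interior L" "0 < \<mu>"
  shows "f \<in> interior B"
proof -
  obtain e where "0 < e" "ball f e \<subseteq> L"
    using assms(2) mem_interior by blast
  then have "ball f (\<mu> * e) \<subseteq> B"
    using assms(1,3) shrink_ball[of \<mu> f e] unfolding shrink_def by blast
  then show ?thesis
    using \<open>0 < e\<close> \<open>0 < \<mu>\<close> by (meson mem_interior mult_pos_pos)
qed

lemma psi_transl_le_if_shrink_subset:
  fixes L B :: "(real^'n) set"
  assumes "shrink \<mu> L f \<subseteq> B" "f \<in> interior L" "0 < \<mu>"
  shows "\<mu> * psi (transl B f) x \<le> psi (transl L f) x"
proof (rule psi_ge)
  obtain e where "0 < e" "ball f e \<subseteq> L"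
    using assms(2) mem_interior by blast
  then show "gauge_levels (transl L f) x \<noteq> {}"
    by (intro gauge_levels_nonempty[of e]) (auto simp: ball_subset_transl_iff)
  fix l
  assume "l \<in> gauge_levels (transl L f) x"
  then have l: "0 < l" "(1/l) *\<^sub>R x + f \<in> L"
    by (auto simp: gauge_levels_def mem_transl_iff)
  then have "\<mu> *\<^sub>R ((1/l) *\<^sub>R x + f) + (1 - \<mu>) *\<^sub>R f \<in> B"
    using assms(1) unfolding shrink_def by blast
  then have "l / \<mu> \<in> gauge_levels (transl B f) x"
    using l assms(3) by (simp add: gauge_levels_def mem_transl_iff algebra_simps)
  then show "\<mu> * psi (transl B f) x \<le> l"
    using psi_le assms(3) by (fastforce simp: field_simps)
qed

section \<open>Limits of gauges\<close>

lemma Cauchy_if_Cauchy_on_dense_lipschitz: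
  fixes g :: "nat \<Rightarrow> 'a::real_normed_vector \<Rightarrow> real"
  assumes "x \<in> closure T" and Cauchy_T: "\<And>y. y \<in> T \<Longrightarrow> Cauchy (\<lambda>t. g t y)"
    and lipschitz: "\<And>t x y. \<bar>g t x - g t y\<bar> \<le> c * norm (x - y)" and "0 < c"
  shows "Cauchy (\<lambda>t. g t x)"
proof (rule CauchyI)
  fix e :: real
  assume "0 < e"
  then have "0 < e / (3 * c)"
    using \<open>0 < c\<close> by simp
  then obtain y where y: "y \<in> T" "dist y x < e / (3 * c)"
    using \<open>x \<in> closure T\<close> unfolding closure_approachable by blast
  obtain M where M: "\<forall>m\<ge>M. \<forall>n\<ge>M. norm (g m y - g n y) < e/3"
    using CauchyD[OF Cauchy_T[OF y(1)], of "e/3"] \<open>0 < e\<close> by auto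
  have close: "\<bar>g t x - g t y\<bar> < e/3" for t
  proof -
    have "\<bar>g t x - g t y\<bar> \<le> c * norm (x - y)" by (rule lipschitz)
    also have "\<dots> < c * (e / (3 * c))"
      using y(2) \<open>0 < c\<close> by (intro mult_strict_left_mono) (simp_all add: dist_norm norm_minus_commute)
    finally show ?thesis using \<open>0 < c\<close> by simp
  qed
  have "norm (g m x - g n x) < e" if "M \<le> m" "M \<le> n" for m n
  proof -
    have "\<bar>g m y - g n y\<bar> < e/3"
      using M that by auto
    then show ?thesis
      using close[of m] close[of n] unfolding real_norm_def by linarith
  qed
  then show "\<exists>M. \<forall>m\<ge>M. \<forall>n\<ge>M. norm (g m x - g n x) < e"
    by blast
qed

text \<open>Dividing by \<open>1 + norm x\<close> makes the family uniformly bounded, so a diagonal subsequence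
  converges on a countable dense set; equi-Lipschitz continuity spreads this to every point.\<close>
lemma lipschitz_family_convergent_subseq:
  fixes g :: "nat \<Rightarrow> 'a::euclidean_space \<Rightarrow> real"
  assumes bound: "\<And>t x. \<bar>g t x\<bar> \<le> c * norm x"
    and lipschitz: "\<And>t x y. \<bar>g t x - g t y\<bar> \<le> c * norm (x - y)"
    and "0 < c"
  obtains k G where "strict_mono k" "\<And>x. (\<lambda>t. g (k t) x) \<longlonglongrightarrow> G x"
proof -
  obtain T :: "'a set" where T: "countable T" "UNIV \<subseteq> closure T"
    by (rule separable)
  have "norm (g t x / (1 + norm x)) \<le> c" for t x
  proof -
    have "\<bar>g t x\<bar> \<le> c * (1 + norm x)"
      using bound[of t x] \<open>0 < c\<close> by (simp add: distrib_left)
    then show ?thesis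
      by (simp add: abs_divide divide_le_eq add_pos_nonneg)
  qed
  then obtain k where k: "strict_mono k"
    and conv_T: "\<And>x. x \<in> T \<Longrightarrow> \<exists>l. (\<lambda>t. g (k t) x / (1 + norm x)) \<longlonglongrightarrow> l"
    using function_convergent_subsequence[OF T(1), of "\<lambda>t x. g t x / (1 + norm x)" c] by metis
  have "Cauchy (\<lambda>t. g (k t) x)" if x: "x \<in> T" for x
  proof -
    obtain l where "(\<lambda>t. g (k t) x / (1 + norm x)) \<longlonglongrightarrow> l"
      using conv_T[OF x] by blast
    then have "(\<lambda>t. (1 + norm x) * (g (k t) x / (1 + norm x))) \<longlonglongrightarrow> (1 + norm x) * l"
      by (rule tendsto_mult_left)
    moreover have "1 + norm x \<noteq> 0"
      using norm_ge_zero[of x] by linarith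
    ultimately show ?thesis
      by (auto intro: LIMSEQ_imp_Cauchy)
  qed
  moreover have "\<bar>g (k t) x - g (k t) y\<bar> \<le> c * norm (x - y)" for t x y
    by (rule lipschitz)
  moreover have "x \<in> closure T" for x
    using T(2) by blast
  ultimately have "Cauchy (\<lambda>t. g (k t) x)" for x
    using Cauchy_if_Cauchy_on_dense_lipschitz[where g = "\<lambda>t. g (k t)"] \<open>0 < c\<close> by blast
  then have "(\<lambda>t. g (k t) x) \<longlonglongrightarrow> lim (\<lambda>t. g (k t) x)" for x
    by (simp add: Cauchy_convergent_iff convergent_LIMSEQ_iff)
  then show ?thesis
    by (rule that[OF k])
qed

lemma convex_sublevel_if_sublinear:
  fixes g :: "'a::real_vector \<Rightarrow> real"
  assumes homogeneous: "\<And>c x. 0 \<le> c \<Longrightarrow> g (c *\<^sub>R x) = c * g x"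
    and subadditive: "\<And>x y. g (x + y) \<le> g x + g y"
  shows "convex {x. g x \<le> 1}"
proof (rule convexI)
  fix x y :: 'a and u v :: real
  assume "x \<in> {x. g x \<le> 1}" "y \<in> {x. g x \<le> 1}" "0 \<le> u" "0 \<le> v" "u + v = 1"
  then have "u * g x \<le> u" "v * g y \<le> v"
    by (simp_all add: mult_left_le)
  then show "u *\<^sub>R x + v *\<^sub>R y \<in> {x. g x \<le> 1}"
    using subadditive[of "u *\<^sub>R x" "v *\<^sub>R y"] \<open>u + v = 1\<close> \<open>0 \<le> u\<close> \<open>0 \<le> v\<close>
    by (simp add: homogeneous)
qed

text \<open>The limit inherits nonnegativity, positive homogeneity and subadditivity, which makes it
  the gauge of its unit sublevel set.\<close>
lemma psi_limit_sublevel: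
  fixes D :: "nat \<Rightarrow> (real^'n) set"
  assumes convex: "\<And>t. convex (D t)" and ball: "\<And>t. ball 0 r \<subseteq> D t" and "0 < r"
    and lim: "\<And>x. (\<lambda>t. psi (D t) x) \<longlonglongrightarrow> G x"
  shows "closed {x. G x \<le> 1}" "convex {x. G x \<le> 1}" "ball 0 r \<subseteq> {x. G x \<le> 1}"
    "psi {x. G x \<le> 1} = G"
proof -
  have nonneg: "0 \<le> G x" for x
    using lim by (rule LIMSEQ_le_const) (use psi_nonneg[OF ball \<open>0 < r\<close>] in blast)
  have bound: "G x \<le> norm x / r" for x
    using lim by (rule LIMSEQ_le_const2) (use psi_le_norm_divide[OF ball \<open>0 < r\<close>] in blast)
  have homogeneous: "G (c *\<^sub>R x) = c * G x" if "0 \<le> c" for c x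
    using lim[of "c *\<^sub>R x"] tendsto_mult_left[OF lim[of x], of c]
    by (simp add: psi_scaleR[OF ball \<open>0 < r\<close> that] LIMSEQ_unique)
  have subadditive: "G (x + y) \<le> G x + G y" for x y
  proof -
    have "(\<lambda>t. psi (D t) x + psi (D t) y) \<longlonglongrightarrow> G x + G y"
      by (intro tendsto_add lim)
    then show ?thesis
      by (rule LIMSEQ_le[OF lim]) (use psi_add_le[OF ball \<open>0 < r\<close> convex] in blast)
  qed
  have "\<bar>G x - G y\<bar> \<le> norm (x - y) / r" for x y
    using tendsto_rabs[OF tendsto_diff[OF lim[of x] lim[of y]]]
    by (rule LIMSEQ_le_const2) (use psi_lipschitz[OF ball \<open>0 < r\<close> convex] in blast)
  then have "continuous_on UNIV G"
    by (intro lipschitz_on_continuous_on[where L = "1 / r"] lipschitz_onI)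
      (use \<open>0 < r\<close> in \<open>auto simp: dist_real_def dist_norm\<close>)
  then show "closed {x. G x \<le> 1}"
    by (rule closed_Collect_le[OF _ continuous_on_const])
  show "convex {x. G x \<le> 1}"
    using homogeneous subadditive by (rule convex_sublevel_if_sublinear)
  show "ball 0 r \<subseteq> {x. G x \<le> 1}"
  proof
    fix x :: "real^'n"
    assume "x \<in> ball 0 r"
    then have "norm x / r < 1"
      using \<open>0 < r\<close> by simp
    then show "x \<in> {x. G x \<le> 1}"
      using bound[of x] by simp
  qed
  show "psi {x. G x \<le> 1} = G"
    using nonneg homogeneous by (intro ext psi_sublevel) auto
qed

lemma gauge_sequence_convergent_subseq:
  fixes D :: "nat \<Rightarrow> (real^'n) set"
  assumes "\<And>t. convex (D t)" "\<And>t. ball 0 r \<subseteq> D t" "0 < r"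
  obtains k S where "strict_mono k" "closed S" "convex S" "ball 0 r \<subseteq> S"
    "\<And>x. (\<lambda>t. psi (D (k t)) x) \<longlonglongrightarrow> psi S x"
proof -
  have bound: "\<bar>psi (D t) x\<bar> \<le> 1 / r * norm x" for t x
    using psi_nonneg[OF assms(2,3)] psi_le_norm_divide[OF assms(2,3)] by simp
  have lipschitz: "\<bar>psi (D t) x - psi (D t) y\<bar> \<le> 1 / r * norm (x - y)" for t x y
    using psi_lipschitz[OF assms(2,3,1)] by simp
  obtain k G where "strict_mono k" and lim: "\<And>x. (\<lambda>t. psi (D (k t)) x) \<longlonglongrightarrow> G x"
    using lipschitz_family_convergent_subseq[of "\<lambda>t. psi (D t)" "1 / r", OF bound lipschitz] assms(3) by auto
  note sublevel = psi_limit_sublevel[of "\<lambda>t. D (k t)" r G, OF assms lim]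
  show thesis
    by (rule that[OF \<open>strict_mono k\<close> sublevel(1-3)]) (use lim sublevel(4) in simp)
qed

lemma translation_mem_fam_at_Cn:
  fixes S :: "(real^'n) set"
  assumes "closed S" "convex S" "ball 0 r \<subseteq> S" "0 < r"
  shows "(+) f ` S \<in> fam_at Cn f"
proof -
  have "ball f r \<subseteq> (+) f ` S"
    using assms(3) ball_subset_transl_iff[of r "(+) f ` S" f] by (simp add: transl_translation)
  then have "f \<in> interior ((+) f ` S)"
    using \<open>0 < r\<close> mem_interior by blast
  moreover have "closed ((+) f ` S)" "convex ((+) f ` S)"
    using assms(1,2) by (simp_all add: closed_translation convex_translation)
  ultimately show ?thesis
    using aff_dim_nonempty_interior[of "(+) f ` S"] by (auto simp: fam_at_def Cn_def)
qed

lemma f_closed_limit: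
  fixes Bs :: "nat \<Rightarrow> (real^'n) set"
  assumes "\<B> \<subseteq> Cn" "f_closed f \<B>" "\<And>t. Bs t \<in> \<B>" "\<And>t. ball f r \<subseteq> Bs t" "0 < r"
  obtains k C where "strict_mono k" "C \<in> \<B>"
    "\<And>z. eventually (\<lambda>t. z \<in> Bs (k t)) sequentially \<Longrightarrow> z \<in> C"
proof -
  have "convex (transl (Bs t) f)" for t
    using assms(1,3) by (auto simp: Cn_def intro: convex_transl)
  moreover have "ball 0 r \<subseteq> transl (Bs t) f" for t
    using assms(4) by (simp add: ball_subset_transl_iff)
  ultimately obtain k S where k: "strict_mono k" and S: "closed S" "convex S" "ball 0 r \<subseteq> S"
    and lim: "\<And>x. (\<lambda>t. psi (transl (Bs (k t)) f) x) \<longlonglongrightarrow> psi S x"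
    using gauge_sequence_convergent_subseq[of "\<lambda>t. transl (Bs t) f" r] assms(5) by metis
  define C where "C = (+) f ` S"
  have transl_C: "transl C f = S"
    by (simp add: C_def transl_translation)
  have "C \<in> fam_at Cn f"
    unfolding C_def using S \<open>0 < r\<close> by (rule translation_mem_fam_at_Cn)
  moreover have "Bs (k t) \<in> fam_at \<B> f" for t
    using assms(3,4,5) by (auto simp: fam_at_def mem_interior)
  moreover have "\<forall>x. (\<lambda>t. psi (transl (Bs (k t)) f) x) \<longlonglongrightarrow> psi (transl C f) x"
    using lim by (simp add: transl_C)
  ultimately have "C \<in> fam_at \<B> f"
    using assms(2)[unfolded f_closed_def, rule_format, of "\<lambda>t. Bs (k t)" C] by blast
  then have "C \<in> \<B>"
    by (simp add: fam_at_def)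
  moreover have "z \<in> C" if "eventually (\<lambda>t. z \<in> Bs (k t)) sequentially" for z
  proof -
    have "eventually (\<lambda>t. psi (transl (Bs (k t)) f) (z - f) \<le> 1) sequentially"
      using that by (rule eventually_mono) (simp add: psi_le_one mem_transl_iff)
    then have "psi S (z - f) \<le> 1"
      by (rule tendsto_upperbound[OF lim]) simp
    then have "z - f \<in> S"
      using mem_if_psi_le_one[OF S \<open>0 < r\<close>] by blast
    then show "z \<in> C"
      using image_eqI[of z "(+) f" "z - f" S] by (simp add: C_def)
  qed
  ultimately show thesis
    using that k by blast
qed

section \<open>Polyhedra\<close>

lemma small_step_in_halfspaces:
  fixes a :: "'i \<Rightarrow> 'a::real_inner"
  assumes "finite I" "v \<in> {x. \<forall>i\<in>I. a i \<bullet> x \<le> b i}"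
    and active: "\<And>i. i \<in> I \<Longrightarrow> a i \<bullet> v = b i \<Longrightarrow> a i \<bullet> d = 0"
  obtains \<epsilon> :: real where "0 < \<epsilon>" "v + \<epsilon> *\<^sub>R d \<in> {x. \<forall>i\<in>I. a i \<bullet> x \<le> b i}"
proof -
  have "\<forall>\<^sub>F \<epsilon> in at_right 0. a i \<bullet> (v + \<epsilon> *\<^sub>R d) \<le> b i" if i: "i \<in> I" for i
  proof (cases "a i \<bullet> v = b i")
    case True
    then show ?thesis
      using active[OF i] by (simp add: inner_add_right)
  next
    case False
    then have "a i \<bullet> v < b i"
      using assms(2) i by (auto simp: less_le)
    moreover have "((\<lambda>\<epsilon>. a i \<bullet> (v + \<epsilon> *\<^sub>R d)) \<longlongrightarrow> a i \<bullet> (v + 0 *\<^sub>R d)) (at_right 0)"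
      by (intro tendsto_intros)
    ultimately show ?thesis
      using order_tendstoD(2) by (fastforce elim: eventually_mono)
  qed
  then have "\<forall>\<^sub>F \<epsilon> in at_right 0. v + \<epsilon> *\<^sub>R d \<in> {x. \<forall>i\<in>I. a i \<bullet> x \<le> b i}"
    using assms(1) by (simp add: eventually_ball_finite_distrib)
  then have "\<forall>\<^sub>F \<epsilon> in at_right 0. 0 < \<epsilon> \<and> v + \<epsilon> *\<^sub>R d \<in> {x. \<forall>i\<in>I. a i \<bullet> x \<le> b i}"
    using eventually_at_right_less by (rule eventually_conj[rotated])
  then show thesis
    using that eventually_happens' trivial_limit_at_right_real by blast
qed

text \<open>If \<open>w \<noteq> v\<close> had the same active constraints as the extreme point \<open>v\<close>, then \<open>v\<close> could be
  pushed a little away from \<open>w\<close> inside the polyhedron, and would lie strictly between that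
  point and \<open>w\<close>.\<close>
lemma inj_on_active_constraints:
  fixes a :: "'i \<Rightarrow> 'a::real_inner"
  assumes "finite I"
  shows "inj_on (\<lambda>v. {i\<in>I. a i \<bullet> v = b i}) {v. v extreme_point_of {x. \<forall>i\<in>I. a i \<bullet> x \<le> b i}}"
proof (rule inj_onI, rule ccontr)
  define P where "P = {x. \<forall>i\<in>I. a i \<bullet> x \<le> b i}"
  fix v w
  assume v: "v \<in> {v. v extreme_point_of {x. \<forall>i\<in>I. a i \<bullet> x \<le> b i}}"
    and w: "w \<in> {v. v extreme_point_of {x. \<forall>i\<in>I. a i \<bullet> x \<le> b i}}"
    and same: "{i\<in>I. a i \<bullet> v = b i} = {i\<in>I. a i \<bullet> w = b i}" and "v \<noteq> w"
  then have vP: "v \<in> P" and wP: "w \<in> P" and extreme: "\<forall>p\<in>P. \<forall>q\<in>P. v \<notin> open_segment p q"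
    by (auto simp: P_def extreme_point_of_def)
  have "a i \<bullet> (v - w) = 0" if "i \<in> I" "a i \<bullet> v = b i" for i
  proof -
    have "a i \<bullet> w = b i"
      using same that by blast
    then show ?thesis
      using that(2) by (simp add: inner_diff_right)
  qed
  then obtain \<epsilon> :: real where \<epsilon>: "0 < \<epsilon>" "v + \<epsilon> *\<^sub>R (v - w) \<in> P"
    using small_step_in_halfspaces[OF assms vP[unfolded P_def]] unfolding P_def by blast
  have "(1 - \<epsilon> / (1 + \<epsilon>)) *\<^sub>R (v + \<epsilon> *\<^sub>R (v - w)) + (\<epsilon> / (1 + \<epsilon>)) *\<^sub>R w
      = ((1 + \<epsilon>) / (1 + \<epsilon>)) *\<^sub>R v"
    using \<epsilon>(1)
    by (simp add: field_simps algebra_simps scaleR_add_left[symmetric] add_divide_distrib[symmetric])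
  then have "v = (1 - \<epsilon> / (1 + \<epsilon>)) *\<^sub>R (v + \<epsilon> *\<^sub>R (v - w)) + (\<epsilon> / (1 + \<epsilon>)) *\<^sub>R w"
    using \<epsilon>(1) by simp
  moreover have "v + \<epsilon> *\<^sub>R (v - w) \<noteq> w"
  proof
    assume "v + \<epsilon> *\<^sub>R (v - w) = w"
    then have "(1 + \<epsilon>) *\<^sub>R (v - w) = 0"
      by (simp add: algebra_simps)
    then show False
      using \<epsilon>(1) \<open>v \<noteq> w\<close> by simp
  qed
  ultimately have "v \<in> open_segment (v + \<epsilon> *\<^sub>R (v - w)) w"
    using \<epsilon>(1) unfolding in_segment by (intro conjI exI[of _ "\<epsilon> / (1 + \<epsilon>)"]) auto
  then show False
    using extreme \<epsilon>(2) wP by blast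
qed

lemma finite_extreme_points_halfspaces:
  fixes a :: "'i \<Rightarrow> 'a::real_inner"
  assumes "finite I"
  shows "finite {v. v extreme_point_of {x. \<forall>i\<in>I. a i \<bullet> x \<le> b i}}"
  by (rule inj_on_finite[OF inj_on_active_constraints[OF assms], of _ _ "Pow I"]) (use assms in auto)

lemma card_extreme_points_halfspaces_le:
  fixes a :: "'i \<Rightarrow> 'a::real_inner"
  assumes "finite I"
  shows "card {v. v extreme_point_of {x. \<forall>i\<in>I. a i \<bullet> x \<le> b i}} \<le> 2 ^ card I"
proof -
  have "card {v. v extreme_point_of {x. \<forall>i\<in>I. a i \<bullet> x \<le> b i}} \<le> card (Pow I)"
    using inj_on_active_constraints[OF assms] assms by (intro card_inj_on_le) auto
  then show ?thesis
    using assms by (simp add: card_Pow)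
qed

text \<open>A point outside would be joined to an interior point by a segment crossing the
  frontier, i.e. some facet; the supporting inequality of that facet is strict at the
  interior point and not violated at the outside one, so it is strict on the crossing.\<close>
lemma polyhedron_eq_facet_halfspaces:
  fixes L :: "'a::euclidean_space set"
  assumes poly: "polyhedron L" and "interior L \<noteq> {}"
  obtains a b where "L = {x. \<forall>F\<in>{F. F facet_of L}. a F \<bullet> x \<le> b F}"
proof -
  have "\<exists>a b. a \<noteq> 0 \<and> L \<subseteq> {x. a \<bullet> x \<le> b} \<and> F = L \<inter> {x. a \<bullet> x = b}" if "F facet_of L" for F
    using facet_of_polyhedron[OF poly that] by blast
  then obtain a b where ab: "\<And>F. F facet_of L \<Longrightarrow> a F \<noteq> 0 \<and> L \<subseteq> {x. a F \<bullet> x \<le> b F} \<and> F = L \<inter> {x. a F \<bullet> x = b F}"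
    by metis
  obtain f where f: "f \<in> interior L"
    using assms(2) by blast
  have "x \<in> L" if x: "\<forall>F\<in>{F. F facet_of L}. a F \<bullet> x \<le> b F" for x
  proof (rule ccontr)
    assume "x \<notin> L"
    moreover have "f \<in> L"
      using f interior_subset by blast
    ultimately have "closed_segment f x \<inter> frontier L \<noteq> {}"
      by (intro connected_Int_frontier) auto
    moreover have "frontier L = \<Union>{F. F facet_of L}"
      using assms(2) rel_frontier_of_polyhedron[OF poly] by (simp add: rel_frontier_nonempty_interior)
    ultimately obtain y F where y: "y \<in> closed_segment f x" "F facet_of L" "y \<in> F"
      by blast
    then have ay: "a F \<bullet> y = b F" and "y \<noteq> x"
      using ab[of F] \<open>x \<notin> L\<close> by auto
    have "f \<in> interior {x. a F \<bullet> x \<le> b F}"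
      using f interior_mono ab[OF y(2)] by blast
    then have af: "a F \<bullet> f < b F"
      using ab[OF y(2)] by simp
    obtain u where u: "0 \<le> u" "u < 1" "y = (1 - u) *\<^sub>R f + u *\<^sub>R x"
      using y(1) \<open>y \<noteq> x\<close> unfolding in_segment by (metis less_eq_real_def scaleR_one diff_self scaleR_zero_left add_0)
    have "a F \<bullet> y = (1 - u) * (a F \<bullet> f) + u * (a F \<bullet> x)"
      using u(3) by (simp add: inner_add_right)
    also have "\<dots> < (1 - u) * b F + u * b F"
      using af x y(2) u by (intro add_less_le_mono mult_strict_left_mono mult_left_mono) auto
    finally show False
      using ay by (simp add: algebra_simps)
  qed
  then have "L = {x. \<forall>F\<in>{F. F facet_of L}. a F \<bullet> x \<le> b F}"
    using ab by blast
  then show thesis ..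
qed

lemma halfspaces_Int_cbox:
  fixes a :: "'i \<Rightarrow> 'a::euclidean_space"
  assumes "finite I"
  obtains J :: "('i + 'a \<times> bool) set" and a' b'
  where "finite J" "card J \<le> card I + 2 * DIM('a)"
    "{x. \<forall>i\<in>I. a i \<bullet> x \<le> b i} \<inter> cbox l u = {x. \<forall>j\<in>J. a' j \<bullet> x \<le> b' j}"
proof
  define J :: "('i + 'a \<times> bool) set" where "J = Inl ` I \<union> Inr ` (Basis \<times> UNIV)"
  show "finite J"
    using assms by (simp add: J_def)
  have "card J \<le> card (Inl ` I :: ('i + 'a \<times> bool) set) + card (Inr ` (Basis \<times> UNIV) :: ('i + 'a \<times> bool) set)"
    unfolding J_def by (rule card_Un_le)
  also have "\<dots> = card I + 2 * DIM('a)"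
    by (simp add: card_image card_cartesian_product)
  finally show "card J \<le> card I + 2 * DIM('a)" .
  show "{x. \<forall>i\<in>I. a i \<bullet> x \<le> b i} \<inter> cbox l u
    = {x. \<forall>j\<in>J. case_sum a (\<lambda>(e, upper). if upper then e else - e) j \<bullet> x
                  \<le> case_sum b (\<lambda>(e, upper). if upper then u \<bullet> e else - (l \<bullet> e)) j}"
  proof -
    have split_J: "(\<forall>j\<in>J. Q j) \<longleftrightarrow> (\<forall>i\<in>I. Q (Inl i)) \<and> (\<forall>e\<in>Basis. Q (Inr (e, True)) \<and> Q (Inr (e, False)))"
      for Q :: "'i + 'a \<times> bool \<Rightarrow> bool"
      unfolding J_def by (auto, metis (full_types))
    show ?thesis
      unfolding split_J by (auto simp: mem_box inner_commute)
  qed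
qed

lemma polyhedron_Int_cbox_eq_convex_hull:
  fixes a :: "'i \<Rightarrow> 'a::euclidean_space"
  assumes "finite I"
  obtains E where "finite E" "card E \<le> 2 ^ (card I + 2 * DIM('a))"
    "{x. \<forall>i\<in>I. a i \<bullet> x \<le> b i} \<inter> cbox l u = convex hull E"
proof -
  obtain J :: "('i + 'a \<times> bool) set" and a' b' where J: "finite J" "card J \<le> card I + 2 * DIM('a)"
    and P: "{x. \<forall>i\<in>I. a i \<bullet> x \<le> b i} \<inter> cbox l u = {x. \<forall>j\<in>J. a' j \<bullet> x \<le> b' j}"
    by (rule halfspaces_Int_cbox[OF assms])
  define E where "E = {v. v extreme_point_of {x. \<forall>j\<in>J. a' j \<bullet> x \<le> b' j}}"
  have "closed {x. \<forall>i\<in>I. a i \<bullet> x \<le> b i}"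
    by (simp add: Collect_ball_eq closed_INT closed_halfspace_le)
  then have "compact {x. \<forall>j\<in>J. a' j \<bullet> x \<le> b' j}"
    unfolding P[symmetric] using compact_cbox by (rule closed_Int_compact)
  moreover have "convex {x. \<forall>j\<in>J. a' j \<bullet> x \<le> b' j}"
    by (simp add: Collect_ball_eq convex_INT convex_halfspace_le)
  ultimately have "{x. \<forall>i\<in>I. a i \<bullet> x \<le> b i} \<inter> cbox l u = convex hull E"
    unfolding P E_def by (rule Krein_Milman_Minkowski)
  moreover have "card E \<le> 2 ^ (card I + 2 * DIM('a))"
  proof -
    have "(2::nat) ^ card J \<le> 2 ^ (card I + 2 * DIM('a))"
      using J(2) by (rule power_increasing) simp
    then show ?thesis
      using card_extreme_points_halfspaces_le[OF J(1), of a' b'] unfolding E_def by linarith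
  qed
  ultimately show thesis
    using that finite_extreme_points_halfspaces[OF J(1)] unfolding E_def by blast
qed

lemma cball_subset_cbox_One: "cball f r \<subseteq> cbox (f - r *\<^sub>R One) (f + r *\<^sub>R One)"
proof
  fix x
  assume "x \<in> cball f r"
  then have "\<bar>(x - f) \<bullet> i\<bar> \<le> r" if "i \<in> Basis" for i
    using Basis_le_norm[OF that, of "x - f"] by (simp add: dist_norm norm_minus_commute)
  then show "x \<in> cbox (f - r *\<^sub>R One) (f + r *\<^sub>R One)"
    unfolding mem_box by (force simp: inner_diff_left inner_add_left abs_le_iff)
qed

section \<open>Admissible ratios\<close>

definition admissible_ratio :: "real^'n \<Rightarrow> (real^'n) set set \<Rightarrow> (real^'n) set set \<Rightarrow> real \<Rightarrow> bool" where
  "admissible_ratio f \<B> \<L> a \<longleftrightarrow> 0 < a \<and> (\<forall>k::nat. k \<ge> 1 \<longrightarrow> (\<forall>r::nat \<Rightarrow> real^'n.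
      CFam \<B> k r f \<subseteq> sscale (1 / a) (CFam \<L> k r f)))"

lemma rho_f_eq_Inf_admissible_ratio: "rho_f f \<B> \<L> = Inf (ereal ` {a. admissible_ratio f \<B> \<L> a})"
  by (simp add: rho_f_def admissible_ratio_def)

lemma rho_f_less_iff: "rho_f f \<B> \<L> < c \<longleftrightarrow> (\<exists>a. admissible_ratio f \<B> \<L> a \<and> ereal a < c)"
  by (auto simp: rho_f_eq_Inf_admissible_ratio Inf_less_iff)

lemma rho_f_le_admissible_ratio: "admissible_ratio f \<B> \<L> a \<Longrightarrow> rho_f f \<B> \<L> \<le> ereal a"
  unfolding rho_f_eq_Inf_admissible_ratio by (rule Inf_lower) simp

lemma mem_sscale_iff:
  assumes "0 < a"
  shows "s \<in> sscale (1 / a) X \<longleftrightarrow> (\<lambda>j. a * s j) \<in> X"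
proof -
  have "s = (\<lambda>j. 1 / a * t j) \<longleftrightarrow> (\<lambda>j. a * s j) = t" for t
    using assms by (auto simp: field_simps)
  then show ?thesis
    by (auto simp: sscale_def image_iff)
qed

lemma mem_CFam_iff:
  "s \<in> CFam \<B> k r f \<longleftrightarrow>
     s \<in> orth k \<and> (\<forall>B\<in>fam_at \<B> f. 1 \<le> (\<Sum>j<k. s j * psi (transl B f) (r j)))"
proof -
  have "s \<in> CB B k r f \<longleftrightarrow> s \<in> orth k \<and> (f \<in> interior B \<longrightarrow> 1 \<le> (\<Sum>j<k. s j * psi (transl B f) (r j)))"
    for B by (simp add: CB_def)
  then show ?thesis
    by (auto simp: CFam_def fam_at_def)
qed

lemma admissible_ratio_iff:
  "admissible_ratio f \<B> \<L> a \<longleftrightarrow> 0 < a \<and>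
     (\<forall>k\<ge>1. \<forall>r s. s \<in> CFam \<B> k r f \<longrightarrow> (\<lambda>j. a * s j) \<in> CFam \<L> k r f)"
  by (auto simp: admissible_ratio_def mem_sscale_iff subset_iff)

lemma scale_mem_CFam:
  assumes "s \<in> CFam \<L> k r f" "1 \<le> c"
  shows "(\<lambda>j. c * s j) \<in> CFam \<L> k r f"
proof -
  have "(\<lambda>j. c * s j) \<in> orth k"
    using assms by (auto simp: mem_CFam_iff orth_def)
  moreover have "1 \<le> (\<Sum>j<k. c * s j * psi (transl L f) (r j))"
    if "1 \<le> (\<Sum>j<k. s j * psi (transl L f) (r j))" for L
    using that assms(2) mult_mono[OF assms(2) that]
    by (simp add: sum_distrib_left mult.assoc)
  ultimately show ?thesis
    using assms(1) by (simp add: mem_CFam_iff)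
qed

lemma admissible_ratio_mono:
  assumes "admissible_ratio f \<B> \<L> a" "a \<le> a'"
  shows "admissible_ratio f \<B> \<L> a'"
proof -
  have "0 < a"
    using assms(1) by (simp add: admissible_ratio_iff)
  have "(\<lambda>j. a' * s j) \<in> CFam \<L> k r f" if "k \<ge> 1" "s \<in> CFam \<B> k r f" for k r s
  proof -
    have "(\<lambda>j. (a' / a) * (a * s j)) \<in> CFam \<L> k r f"
      using assms that \<open>0 < a\<close> by (intro scale_mem_CFam[where s = "\<lambda>j. a * s j"]) (auto simp: admissible_ratio_iff)
    then show ?thesis
      using \<open>0 < a\<close> by simp
  qed
  then show ?thesis
    using assms(2) \<open>0 < a\<close> by (simp add: admissible_ratio_iff)
qed

lemma admissible_ratio_gauge_sum:
  assumes "admissible_ratio f \<B> \<L> a" "L \<in> fam_at \<L> f" "k \<ge> 1" "s \<in> orth k"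
    and "\<forall>B\<in>fam_at \<B> f. 1 \<le> (\<Sum>j<k. s j * psi (transl B f) (r j))"
  shows "1 / a \<le> (\<Sum>j<k. s j * psi (transl L f) (r j))"
proof -
  have "(\<lambda>j. a * s j) \<in> CFam \<L> k r f" and "0 < a"
    using assms by (auto simp: admissible_ratio_iff mem_CFam_iff)
  then have "1 \<le> a * (\<Sum>j<k. s j * psi (transl L f) (r j))"
    using assms(2) by (auto simp: mem_CFam_iff sum_distrib_left mult.assoc)
  then show ?thesis
    using \<open>0 < a\<close> by (simp add: field_simps)
qed

lemma shrink_imp_admissible_ratio:
  assumes "0 < \<mu>" and shrink: "\<forall>L\<in>fam_at \<L> f. \<exists>B\<in>\<B>. shrink \<mu> L f \<subseteq> B"
  shows "admissible_ratio f \<B> \<L> (1 / \<mu>)"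
  unfolding admissible_ratio_iff
proof (intro conjI allI impI)
  show "0 < 1 / \<mu>"
    using assms(1) by simp
  fix k r s
  assume s: "s \<in> CFam \<B> k r f"
  then have "(\<lambda>j. 1 / \<mu> * s j) \<in> orth k"
    using assms(1) by (auto simp: mem_CFam_iff orth_def)
  moreover have "1 \<le> (\<Sum>j<k. 1 / \<mu> * s j * psi (transl L f) (r j))" if L: "L \<in> fam_at \<L> f" for L
  proof -
    obtain B where B: "B \<in> \<B>" "shrink \<mu> L f \<subseteq> B"
      using shrink L by blast
    have "f \<in> interior L"
      using L by (simp add: fam_at_def)
    then have "B \<in> fam_at \<B> f" and compare: "\<And>x. \<mu> * psi (transl B f) x \<le> psi (transl L f) x"
      using B assms(1) interior_if_shrink_subset psi_transl_le_if_shrink_subset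
      by (auto simp: fam_at_def)
    then have "1 \<le> (\<Sum>j<k. s j * psi (transl B f) (r j))"
      using s by (simp add: mem_CFam_iff)
    also have "\<dots> \<le> (\<Sum>j<k. 1 / \<mu> * s j * psi (transl L f) (r j))"
    proof (rule sum_mono)
      fix j
      assume "j \<in> {..<k}"
      then have "0 \<le> s j"
        using s by (simp add: mem_CFam_iff orth_def)
      then have "\<mu> * (s j * psi (transl B f) (r j)) \<le> s j * psi (transl L f) (r j)"
        using mult_left_mono[OF compare[of "r j"] \<open>0 \<le> s j\<close>] by (simp add: ac_simps)
      then show "s j * psi (transl B f) (r j) \<le> 1 / \<mu> * s j * psi (transl L f) (r j)"
        using assms(1) by (simp add: field_simps)
    qed
    finally show ?thesis .
  qed
  ultimately show "(\<lambda>j. 1 / \<mu> * s j) \<in> CFam \<L> k r f"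
    by (simp add: mem_CFam_iff)
qed

section \<open>Covering shrunken polyhedra\<close>

text \<open>All directions get the weight \<open>1 / (2 \<alpha> k)\<close>: then the \<open>L\<close>-sum is at most \<open>1 / (2 \<alpha>)\<close>,
  so some \<open>B\<close> has sum below 1, which bounds each of its gauge values by \<open>2 \<alpha> k\<close>.\<close>
lemma admissible_ratio_equal_weights:
  fixes k :: nat
  assumes adm: "admissible_ratio f \<B> \<L> \<alpha>" and L: "L \<in> fam_at \<L> f"
    and "1 \<le> k" and r: "\<And>j. j < k \<Longrightarrow> r j + f \<in> L"
  shows "\<exists>B\<in>fam_at \<B> f. \<forall>j<k. psi (transl B f) (r j) < 2 * \<alpha> * k"
proof -
  define c where "c = 1 / (2 * \<alpha> * k)"
  define s where "s j = (if j < k then c else 0)" for j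
  have "0 < \<alpha>"
    using adm by (simp add: admissible_ratio_iff)
  then have "0 < c"
    using \<open>1 \<le> k\<close> by (simp add: c_def)
  have s: "s \<in> orth k"
    using \<open>0 < c\<close> by (simp add: orth_def s_def)
  have "(\<Sum>j<k. s j * psi (transl L f) (r j)) \<le> (\<Sum>j<k. c)"
    using \<open>0 < c\<close> r psi_le_one[of "r _" "transl L f"]
    by (intro sum_mono) (simp add: s_def mem_transl_iff mult_left_le)
  also have "\<dots> < 1 / \<alpha>"
    using \<open>0 < \<alpha>\<close> \<open>1 \<le> k\<close> by (simp add: c_def field_simps)
  finally obtain B where B: "B \<in> fam_at \<B> f" and sum_B: "(\<Sum>j<k. s j * psi (transl B f) (r j)) < 1"
    using admissible_ratio_gauge_sum[OF adm L \<open>1 \<le> k\<close> s, of r] by force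
  then obtain d where "0 < d" "ball 0 d \<subseteq> transl B f"
    by (auto simp: fam_at_def mem_interior ball_subset_transl_iff)
  have "psi (transl B f) (r j) < 2 * \<alpha> * k" if "j < k" for j
  proof -
    have "0 \<le> s i * psi (transl B f) (r i)" for i
      using \<open>0 < c\<close> psi_nonneg[OF \<open>ball 0 d \<subseteq> transl B f\<close> \<open>0 < d\<close>] by (simp add: s_def)
    then have "s j * psi (transl B f) (r j) \<le> (\<Sum>i<k. s i * psi (transl B f) (r i))"
      using that by (intro member_le_sum) auto
    then have "c * psi (transl B f) (r j) < 1"
      using sum_B that by (simp add: s_def)
    then show ?thesis
      using \<open>0 < c\<close> by (simp add: c_def field_simps)
  qed
  then show ?thesis
    using B by blast
qed

lemma admissible_ratio_shrink_convex_hull: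
  assumes adm: "admissible_ratio f \<B> \<L> \<alpha>" and L: "L \<in> fam_at \<L> f"
    and convex: "\<And>B. B \<in> \<B> \<Longrightarrow> convex B"
    and E: "finite E" "E \<noteq> {}" "E \<subseteq> L" "card E \<le> N"
  shows "\<exists>B\<in>fam_at \<B> f. shrink (1 / (2 * \<alpha> * N + 1)) (convex hull E) f \<subseteq> B"
proof -
  define k where "k = card E"
  obtain e where e: "bij_betw e {..<k} E"
    using ex_bij_betw_nat_finite[OF E(1)] by (auto simp: k_def atLeast0LessThan)
  have "1 \<le> k"
    using E(1,2) by (simp add: k_def Suc_le_eq card_gt_0_iff)
  moreover have "(e j - f) + f \<in> L" if "j < k" for j
    using that e E(3) bij_betwE by fastforce
  ultimately have "\<exists>B\<in>fam_at \<B> f. \<forall>j<k. psi (transl B f) (e j - f) < 2 * \<alpha> * k"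
    by (rule admissible_ratio_equal_weights[OF adm L])
  then obtain B where B: "B \<in> fam_at \<B> f" and psi_B: "\<forall>j<k. psi (transl B f) (e j - f) < 2 * \<alpha> * k"
    by blast
  then obtain d where "0 < d" "ball 0 d \<subseteq> transl B f"
    by (auto simp: fam_at_def mem_interior ball_subset_transl_iff)
  have "convex B"
    using B convex by (simp add: fam_at_def)
  have "0 < \<alpha>"
    using adm by (simp add: admissible_ratio_iff)
  have "shrink (1 / (2 * \<alpha> * N + 1)) {e j} f \<subseteq> B" if "j < k" for j
  proof -
    have "psi (transl B f) (e j - f) < 2 * \<alpha> * k"
      using psi_B that by blast
    also have "\<dots> \<le> 2 * \<alpha> * N"
      using \<open>0 < \<alpha>\<close> E(4) by (simp add: k_def)
    also have "\<dots> < 2 * \<alpha> * N + 1"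
      by simp
    finally have "(1 / (2 * \<alpha> * N + 1)) *\<^sub>R (e j - f) \<in> transl B f"
      using scaleR_mem_if_psi_less[OF convex_transl[OF \<open>convex B\<close>] \<open>ball 0 d \<subseteq> transl B f\<close> \<open>0 < d\<close>]
      by blast
    then show ?thesis
      by (simp add: shrink_def mem_transl_iff algebra_simps)
  qed
  then have "shrink (1 / (2 * \<alpha> * N + 1)) E f \<subseteq> B"
    using e by (auto simp: shrink_def bij_betw_def)
  then have "shrink (1 / (2 * \<alpha> * N + 1)) (convex hull E) f \<subseteq> B"
    unfolding shrink_convex_hull using \<open>convex B\<close> by (rule hull_minimal)
  then show ?thesis
    using B by blast
qed

lemma admissible_ratio_shrink_truncation:
  fixes a :: "'i \<Rightarrow> real^'n"
  assumes adm: "admissible_ratio f \<B> \<L> \<alpha>" and L: "L \<in> fam_at \<L> f"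
    and convex: "\<And>B. B \<in> \<B> \<Longrightarrow> convex B"
    and L_eq: "L = {x. \<forall>i\<in>I. a i \<bullet> x \<le> b i}" and "finite I" "card I \<le> m"
    and "f \<in> cbox l u"
  shows "\<exists>B\<in>fam_at \<B> f. shrink (1 / (2 * \<alpha> * 2 ^ (m + 2 * CARD('n)) + 1)) (L \<inter> cbox l u) f \<subseteq> B"
proof -
  obtain E where E: "finite E" "card E \<le> 2 ^ (card I + 2 * DIM(real^'n))"
    and hull: "{x. \<forall>i\<in>I. a i \<bullet> x \<le> b i} \<inter> cbox l u = convex hull E"
    by (rule polyhedron_Int_cbox_eq_convex_hull[OF \<open>finite I\<close>])
  have hull_L: "L \<inter> cbox l u = convex hull E"
    using hull L_eq by simp
  have "(2::nat) ^ (card I + 2 * DIM(real^'n)) \<le> 2 ^ (m + 2 * CARD('n))"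
    using \<open>card I \<le> m\<close> by (intro power_increasing) simp_all
  then have card: "card E \<le> 2 ^ (m + 2 * CARD('n))"
    using E(2) by linarith
  have "f \<in> L"
    using L interior_subset by (auto simp: fam_at_def)
  then have "f \<in> convex hull E"
    using \<open>f \<in> cbox l u\<close> hull_L by blast
  then have "E \<noteq> {}"
    by auto
  moreover have "E \<subseteq> L"
    using hull_subset[of E convex] hull_L by blast
  ultimately show ?thesis
    using admissible_ratio_shrink_convex_hull[OF adm L convex E(1) _ _ card] hull_L by simp
qed

lemma admissible_ratio_shrink_cballs:
  fixes f :: "real^'n"
  assumes "\<B> \<subseteq> Cn" and adm: "admissible_ratio f \<B> \<L> \<alpha>"
    and L: "L \<in> fam_at \<L> f" "polyhedron L" "card {F. F facet_of L} \<le> m"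
  obtains Bs r where "0 < r" "\<And>t. Bs t \<in> \<B>" "\<And>t. ball f r \<subseteq> Bs t"
    "\<And>t. shrink (1 / (2 * \<alpha> * 2 ^ (m + 2 * CARD('n)) + 1)) (L \<inter> cball f (real t)) f \<subseteq> Bs t"
proof -
  define \<mu> where "\<mu> = 1 / (2 * \<alpha> * 2 ^ (m + 2 * CARD('n)) + 1)"
  have "0 < \<alpha>"
    using adm by (simp add: admissible_ratio_iff)
  then have "0 < \<mu>"
    by (simp add: \<mu>_def add_pos_nonneg)
  have f_L: "f \<in> interior L"
    using L(1) by (simp add: fam_at_def)
  then obtain a b where L_eq: "L = {x. \<forall>F\<in>{F. F facet_of L}. a F \<bullet> x \<le> b F}"
    using polyhedron_eq_facet_halfspaces[OF L(2)] by blast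
  define P where "P t = L \<inter> cbox (f - real (Suc t) *\<^sub>R One) (f + real (Suc t) *\<^sub>R One)" for t
  have cball_P: "L \<inter> cball f (real (Suc t)) \<subseteq> P t" for t
    using cball_subset_cbox_One by (auto simp: P_def)
  have "\<exists>B\<in>fam_at \<B> f. shrink \<mu> (P t) f \<subseteq> B" for t
    unfolding P_def \<mu>_def
  proof (rule admissible_ratio_shrink_truncation[OF adm L(1) _ L_eq finite_polyhedron_facets[OF L(2)] L(3)])
    show "convex B" if "B \<in> \<B>" for B
      using that assms(1) by (auto simp: Cn_def)
    show "f \<in> cbox (f - real (Suc t) *\<^sub>R One) (f + real (Suc t) *\<^sub>R One)"
      using cball_subset_cbox_One[of f "real (Suc t)"] by auto
  qed
  then obtain Bs where Bs: "\<And>t. Bs t \<in> fam_at \<B> f" "\<And>t. shrink \<mu> (P t) f \<subseteq> Bs t"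
    by metis
  obtain e where "0 < e" "ball f e \<subseteq> L"
    using f_L mem_interior by blast
  then have "ball f (min e 1) \<subseteq> P t" for t
    using cball_P[of t] by fastforce
  then have "ball f (\<mu> * min e 1) \<subseteq> Bs t" for t
    using Bs(2)[of t] shrink_ball[OF \<open>0 < \<mu>\<close>, of f "min e 1"] unfolding shrink_def by blast
  moreover have "shrink \<mu> (L \<inter> cball f (real t)) f \<subseteq> Bs t" for t
    using Bs(2)[of t] cball_P[of t] unfolding shrink_def by fastforce
  moreover have "0 < \<mu> * min e 1"
    using \<open>0 < e\<close> \<open>0 < \<mu>\<close> by simp
  ultimately show thesis
    using that Bs(1) unfolding \<mu>_def fam_at_def by blast
qed

lemma admissible_ratio_imp_shrink:
  fixes f :: "real^'n"
  assumes "\<B> \<subseteq> Cn" "f_closed f \<B>" and adm: "admissible_ratio f \<B> \<L> \<alpha>"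
    and L: "L \<in> fam_at \<L> f" "polyhedron L" "card {F. F facet_of L} \<le> m"
  shows "\<exists>B\<in>\<B>. shrink (1 / (2 * \<alpha> * 2 ^ (m + 2 * CARD('n)) + 1)) L f \<subseteq> B"
proof -
  define \<mu> where "\<mu> = 1 / (2 * \<alpha> * 2 ^ (m + 2 * CARD('n)) + 1)"
  obtain Bs r where "0 < r" "\<And>t. Bs t \<in> \<B>" "\<And>t. ball f r \<subseteq> Bs t"
    and Bs: "\<And>t. shrink \<mu> (L \<inter> cball f (real t)) f \<subseteq> Bs t"
    using admissible_ratio_shrink_cballs[OF assms(1) adm L] unfolding \<mu>_def by metis
  then obtain k C where k: "strict_mono k" and "C \<in> \<B>"
    and C: "\<And>z. eventually (\<lambda>t. z \<in> Bs (k t)) sequentially \<Longrightarrow> z \<in> C"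
    using f_closed_limit[OF assms(1,2), where Bs = Bs and r = r] by metis
  have "shrink \<mu> L f \<subseteq> C"
  proof
    fix y
    assume "y \<in> shrink \<mu> L f"
    then obtain x where x: "x \<in> L" "y = \<mu> *\<^sub>R x + (1 - \<mu>) *\<^sub>R f"
      by (auto simp: shrink_def)
    obtain N :: nat where N: "dist f x \<le> real N"
      using real_arch_simple by blast
    have "y \<in> Bs (k t)" if "N \<le> t" for t
    proof -
      have "x \<in> L \<inter> cball f (real (k t))"
        using seq_suble[OF k, of t] N that x(1) by simp
      then show ?thesis
        using Bs[of "k t"] x(2) unfolding shrink_def by blast
    qed
    then have "eventually (\<lambda>t. y \<in> Bs (k t)) sequentially"
      by (rule eventually_sequentiallyI)
    then show "y \<in> C"
      by (rule C)
  qed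
  then show ?thesis
    using \<open>C \<in> \<B>\<close> unfolding \<mu>_def by blast
qed

lemma rho_f_less_infinity_iff_shrink:
  fixes f :: "real^'n"
  assumes "\<B> \<subseteq> Cn" "f_closed f \<B>"
    and "\<forall>L\<in>\<L>. polyhedron L" "\<forall>L\<in>\<L>. card {F. F facet_of L} \<le> m"
  shows "rho_f f \<B> \<L> < \<infinity> \<longleftrightarrow>
    (\<exists>\<mu>. 0 < \<mu> \<and> \<mu> < 1 \<and> (\<forall>L\<in>fam_at \<L> f. \<exists>B\<in>\<B>. shrink \<mu> L f \<subseteq> B))"
proof
  assume "rho_f f \<B> \<L> < \<infinity>"
  then obtain \<alpha> where adm: "admissible_ratio f \<B> \<L> \<alpha>"
    unfolding rho_f_less_iff by blast
  then have "0 < \<alpha>"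
    by (simp add: admissible_ratio_iff)
  then show "\<exists>\<mu>. 0 < \<mu> \<and> \<mu> < 1 \<and> (\<forall>L\<in>fam_at \<L> f. \<exists>B\<in>\<B>. shrink \<mu> L f \<subseteq> B)"
    using admissible_ratio_imp_shrink[OF assms(1,2) adm] assms(3,4)
    by (intro exI[of _ "1 / (2 * \<alpha> * 2 ^ (m + 2 * CARD('n)) + 1)"])
      (auto simp: fam_at_def add_pos_nonneg)
next
  assume "\<exists>\<mu>. 0 < \<mu> \<and> \<mu> < 1 \<and> (\<forall>L\<in>fam_at \<L> f. \<exists>B\<in>\<B>. shrink \<mu> L f \<subseteq> B)"
  then obtain \<mu> where "0 < \<mu>" "\<forall>L\<in>fam_at \<L> f. \<exists>B\<in>\<B>. shrink \<mu> L f \<subseteq> B"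
    by blast
  then have "rho_f f \<B> \<L> \<le> ereal (1 / \<mu>)"
    by (intro rho_f_le_admissible_ratio shrink_imp_admissible_ratio)
  then show "rho_f f \<B> \<L> < \<infinity>"
    by (rule le_less_trans) simp
qed

lemma rho_less_infinity_iff_shrink:
  fixes \<B> \<L> :: "(real^'n) set set"
  assumes "\<B> \<subseteq> Cn" "\<forall>f. f \<notin> Zn \<longrightarrow> f_closed f \<B>"
    and "\<forall>L\<in>\<L>. polyhedron L" "\<forall>L\<in>\<L>. card {F. F facet_of L} \<le> m"
  shows "rho \<B> \<L> < \<infinity> \<longleftrightarrow>
    (\<exists>\<mu>. 0 < \<mu> \<and> \<mu> < 1 \<and> (\<forall>f. f \<notin> Zn \<longrightarrow> (\<forall>L\<in>fam_at \<L> f. \<exists>B\<in>\<B>. shrink \<mu> L f \<subseteq> B)))"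
proof
  assume "rho \<B> \<L> < \<infinity>"
  then obtain R :: nat where R: "rho \<B> \<L> < ereal R"
    using less_PInf_Ex_of_nat by auto
  have adm: "admissible_ratio f \<B> \<L> R" if "f \<notin> Zn" for f
  proof -
    have "rho_f f \<B> \<L> < ereal R"
      using that R unfolding rho_def by (meson DiffI SUP_upper UNIV_I le_less_trans)
    then show ?thesis
      by (auto simp: rho_f_less_iff intro: admissible_ratio_mono)
  qed
  have "(\<chi> i. 1 / 2) \<notin> (Zn :: (real^'n) set)"
    by (simp add: Zn_def)
  from adm[OF this] have "0 < real R"
    by (simp add: admissible_ratio_iff)
  then show "\<exists>\<mu>. 0 < \<mu> \<and> \<mu> < 1 \<and> (\<forall>f. f \<notin> Zn \<longrightarrow> (\<forall>L\<in>fam_at \<L> f. \<exists>B\<in>\<B>. shrink \<mu> L f \<subseteq> B))"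
    using admissible_ratio_imp_shrink[OF assms(1) _ adm] assms(2-4)
    by (intro exI[of _ "1 / (2 * real R * 2 ^ (m + 2 * CARD('n)) + 1)"])
      (auto simp: fam_at_def add_pos_nonneg)
next
  assume "\<exists>\<mu>. 0 < \<mu> \<and> \<mu> < 1 \<and> (\<forall>f. f \<notin> Zn \<longrightarrow> (\<forall>L\<in>fam_at \<L> f. \<exists>B\<in>\<B>. shrink \<mu> L f \<subseteq> B))"
  then obtain \<mu> where "0 < \<mu>" "\<forall>f. f \<notin> Zn \<longrightarrow> (\<forall>L\<in>fam_at \<L> f. \<exists>B\<in>\<B>. shrink \<mu> L f \<subseteq> B)"
    by blast
  then have "rho \<B> \<L> \<le> ereal (1 / \<mu>)"
    unfolding rho_def
    by (intro SUP_least rho_f_le_admissible_ratio shrink_imp_admissible_ratio) auto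
  then show "rho \<B> \<L> < \<infinity>"
    by (rule le_less_trans) simp
qed

theorem theorem2p4:
  fixes \<B> \<L> :: "(real^'n) set set" and m :: nat
  assumes B_sub: "\<B> \<subseteq> Cn"
    and L_sub: "\<L> \<subseteq> Cn"
    and L_poly: "\<forall>L\<in>\<L>. polyhedron L"
    and L_facets: "\<forall>L\<in>\<L>. card {F. F facet_of L} \<le> m"
  shows "(\<forall>f. f \<notin> Zn \<and> f_closed f \<B> \<longrightarrow>
            (rho_f f \<B> \<L> < \<infinity> \<longleftrightarrow>
             (\<exists>\<mu>. 0 < \<mu> \<and> \<mu> < 1 \<and>
                (\<forall>L\<in>fam_at \<L> f. \<exists>B\<in>\<B>. shrink \<mu> L f \<subseteq> B))))
       \<and> ((\<forall>f. f \<notin> Zn \<longrightarrow> f_closed f \<B>) \<longrightarrow>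
            (rho \<B> \<L> < \<infinity> \<longleftrightarrow>
             (\<exists>\<mu>. 0 < \<mu> \<and> \<mu> < 1 \<and>
                (\<forall>f. f \<notin> Zn \<longrightarrow> (\<forall>L\<in>fam_at \<L> f. \<exists>B\<in>\<B>. shrink \<mu> L f \<subseteq> B)))))"
  using rho_f_less_infinity_iff_shrink[OF B_sub _ L_poly L_facets]
    rho_less_infinity_iff_shrink[OF B_sub _ L_poly L_facets]
  by blast

end
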